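(* Let $A$ be a set of regular cardinals and let $\kappa\in\operatorname{spec}(A)$ with $\kappa<\sup(A)$. Then $\kappa\in\operatorname{spec}(A\cap(\kappa+1))$.
   Context: For a set $A$ of regular cardinals, $\prod A$ is the set of functions $f$ with domain $A$ and $f(a)\in a$ for all $a\in A$, ordered by pointwise domination: $f<g$ iff $f(a)<g(a)$ for all $a\in A$. A subset of $\prod A$ is bounded if some $g\in\prod A$ pointwise dominates all its members. For a directed poset $P$, $\operatorname{spec}(P)$ is the set of regular cardinals $\kappa$ with $P\geq_T\kappa$ (Tukey reducibility: there is a map $P\to\kappa$ sending cofinal sets to cofinal sets), and $\operatorname{spec}(A):=\operatorname{spec}(\prod A,<)$. Equivalently, a regular $\kappa$ is in $\operatorname{spec}(A)$ iff there is a set $\mathcal{F}\subseteq\prod A$ of size $\kappa$ such that every $\mathcal{F}_0\subseteq\mathcal{F}$ of size $\kappa$ is unbounded in $(\prod A,<)$. *)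

theory Defs
  imports "HOL-Library.FuncSet" "HOL-Library.Equipollence"
begin

text \<open>Ordinals are modelled as elements of an arbitrary well-ordered type 'a;
  the ordinal alpha is identified with its initial segment {..<alpha}.\<close>

definition is_cardinal :: "'a::wellorder \<Rightarrow> bool" where
  "is_cardinal k \<longleftrightarrow> (\<forall>b<k. \<not> ({..<b} \<approx> {..<k}))"

definition regular :: "'a::wellorder \<Rightarrow> bool" where
  "regular k \<longleftrightarrow> infinite {..<k} \<and> is_cardinal k \<and>
     (\<forall>X \<subseteq> {..<k}. (\<forall>a<k. \<exists>x\<in>X. a \<le> x) \<longrightarrow> X \<approx> {..<k})"

definition prodA :: "'a::wellorder set \<Rightarrow> ('a \<Rightarrow> 'a) set" where
  "prodA A = (\<Pi>\<^sub>E a\<in>A. {..<a})"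

definition dom_lt :: "'a::wellorder set \<Rightarrow> ('a \<Rightarrow> 'a) \<Rightarrow> ('a \<Rightarrow> 'a) \<Rightarrow> bool" where
  "dom_lt A f g \<longleftrightarrow> (\<forall>a\<in>A. f a < g a)"

definition cofinal_prod :: "'a::wellorder set \<Rightarrow> ('a \<Rightarrow> 'a) set \<Rightarrow> bool" where
  "cofinal_prod A X \<longleftrightarrow> X \<subseteq> prodA A \<and>
     (\<forall>f\<in>prodA A. \<exists>x\<in>X. f = x \<or> dom_lt A f x)"

definition cofinal_ord :: "'a::wellorder \<Rightarrow> 'a set \<Rightarrow> bool" where
  "cofinal_ord k Y \<longleftrightarrow> Y \<subseteq> {..<k} \<and> (\<forall>b<k. \<exists>y\<in>Y. b \<le> y)"

definition tukey_ge :: "'a::wellorder set \<Rightarrow> 'a \<Rightarrow> bool" where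
  "tukey_ge A k \<longleftrightarrow> (\<exists>g. g \<in> prodA A \<rightarrow> {..<k} \<and>
     (\<forall>X. cofinal_prod A X \<longrightarrow> cofinal_ord k (g ` X)))"

definition spec :: "'a::wellorder set \<Rightarrow> 'a set" where
  "spec A = {k. regular k \<and> tukey_ge A k}"

end

theory Submission
  imports Defs
begin

text \<open>Let \<open>g\<close> witness \<open>\<Pi>A \<ge>\<^sub>T \<kappa>\<close>. For every \<open>\<beta> < \<kappa>\<close> some \<open>f\<^sub>\<beta>\<close> forces \<open>g \<ge> \<beta>\<close> on everything
  above it, since otherwise \<open>{f. g f < \<beta>}\<close> would be cofinal with bounded image. The \<open>\<kappa>\<close> many
  values \<open>f\<^sub>\<beta>(a)\<close> are bounded below each regular \<open>a > \<kappa>\<close>, say by \<open>u(a)\<close>. Padding functions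
  on \<open>A \<inter> (\<kappa>+1)\<close> with \<open>u\<close> on the rest of \<open>A\<close> and then applying \<open>g\<close> is the required Tukey map.\<close>

lemma regular_not_eqpoll_less:
  fixes a b :: "'a::wellorder"
  assumes "regular a" "b < a"
  shows "\<not> {..<b} \<approx> {..<a}"
  using assms unfolding regular_def is_cardinal_def by blast

lemma regular_is_limit:
  fixes a c :: "'a::wellorder"
  assumes "regular a" "c < a"
  shows "\<exists>d. c < d \<and> d < a"
proof (rule ccontr)
  assume "\<not> ?thesis"
  then have eq: "{..<a} = insert c {..<c}"
    using assms(2) by (auto simp: not_less) (meson antisym_conv1 not_less)
  have "infinite {..<a}" using assms(1) unfolding regular_def by blast
  then have "insert c {..<c} \<approx> {..<c}" using eq by (simp add: infinite_insert_eqpoll)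
  then have "{..<c} \<approx> {..<a}" using eq by (simp add: eqpoll_sym)
  then show False using regular_not_eqpoll_less[OF assms] by blast
qed

lemma regular_small_subset_bounded:
  fixes a k :: "'a::wellorder"
  assumes "regular a" "k < a" "Y \<subseteq> {..<a}" "Y \<lesssim> {..<k}"
  shows "\<exists>b<a. \<forall>y\<in>Y. y < b"
proof (rule ccontr)
  assume "\<not> ?thesis"
  then have "\<forall>b<a. \<exists>y\<in>Y. b \<le> y" by (metis leD not_less)
  then have "Y \<approx> {..<a}" using assms(1,3) unfolding regular_def by blast
  then have "{..<a} \<lesssim> {..<k}" using assms(4)
    by (meson eqpoll_sym eqpoll_imp_lepoll lepoll_trans)
  moreover have "{..<k} \<lesssim> {..<a}" using assms(2) by (intro subset_imp_lepoll) auto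
  ultimately have "{..<k} \<approx> {..<a}" by (simp add: lepoll_antisym)
  then show False using regular_not_eqpoll_less[OF assms(1,2)] by blast
qed

lemma exists_prodA_dom_lt:
  assumes "\<forall>a\<in>A. regular a" "\<forall>a\<in>A. f a < a"
  shows "\<exists>h\<in>prodA A. dom_lt A f h"
proof -
  have "\<forall>a\<in>A. \<exists>d. f a < d \<and> d < a" using assms regular_is_limit by blast
  then obtain d where d: "\<And>a. a \<in> A \<Longrightarrow> f a < d a \<and> d a < a" by metis
  show ?thesis
    by (rule bexI[of _ "restrict d A"]) (auto simp: prodA_def dom_lt_def d)
qed

lemma prodA_bound_small_family:
  fixes k :: "'a::wellorder"
  assumes "\<forall>a\<in>A. regular a \<and> k < a" "I \<lesssim> {..<k}" "\<forall>i\<in>I. \<forall>a\<in>A. f i a < a"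
  shows "\<exists>u\<in>prodA A. \<forall>i\<in>I. dom_lt A (f i) u"
proof -
  have "\<exists>b<a. \<forall>y\<in>(\<lambda>i. f i a) ` I. y < b" if "a \<in> A" for a
    using that assms
    by (intro regular_small_subset_bounded[of a k]) (auto intro: lepoll_trans[OF image_lepoll])
  then obtain u where "\<And>a. a \<in> A \<Longrightarrow> u a < a \<and> (\<forall>i\<in>I. f i a < u a)" by (metis imageI)
  then show ?thesis
    by (intro bexI[of _ "restrict u A"]) (auto simp: prodA_def dom_lt_def)
qed

lemma tukey_map_threshold:
  assumes "\<And>X. cofinal_prod A X \<Longrightarrow> cofinal_ord k (g ` X)" "\<beta> < k"
  shows "\<exists>f\<in>prodA A. \<forall>x\<in>prodA A. (f = x \<or> dom_lt A f x) \<longrightarrow> \<beta> \<le> g x"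
proof (rule ccontr)
  assume "\<not> ?thesis"
  then have "cofinal_prod A {f\<in>prodA A. g f < \<beta>}"
    unfolding cofinal_prod_def by (auto simp: not_le)
  then have "cofinal_ord k (g ` {f\<in>prodA A. g f < \<beta>})" by (rule assms(1))
  then show False using assms(2) unfolding cofinal_ord_def by force
qed

lemma tukey_ge_drop_large:
  fixes k :: "'a::wellorder"
  assumes "tukey_ge A k" "B \<subseteq> A" "\<forall>a\<in>A. regular a" "\<forall>a\<in>A - B. k < a"
  shows "tukey_ge B k"
proof -
  obtain g where g_range: "g \<in> prodA A \<rightarrow> {..<k}"
    and g_cofinal: "\<And>X. cofinal_prod A X \<Longrightarrow> cofinal_ord k (g ` X)"
    using assms(1) unfolding tukey_ge_def by blast
  have "\<forall>\<beta>. \<beta> < k \<longrightarrow> (\<exists>f\<in>prodA A. \<forall>x\<in>prodA A. (f = x \<or> dom_lt A f x) \<longrightarrow> \<beta> \<le> g x)"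
    using tukey_map_threshold[OF g_cofinal] by blast
  then obtain t where t: "\<And>\<beta>. \<beta> < k \<Longrightarrow> t \<beta> \<in> prodA A"
    and t_threshold: "\<And>\<beta> x. \<beta> < k \<Longrightarrow> x \<in> prodA A \<Longrightarrow> t \<beta> = x \<or> dom_lt A (t \<beta>) x \<Longrightarrow> \<beta> \<le> g x"
    by metis
  have t_below: "t \<beta> a < a" if "\<beta> < k" "a \<in> A" for \<beta> a
    using t[OF that(1)] that(2) by (auto simp: prodA_def)
  obtain u where u: "u \<in> prodA (A - B)" and u_above: "\<And>\<beta>. \<beta> < k \<Longrightarrow> dom_lt (A - B) (t \<beta>) u"
    using prodA_bound_small_family[of "A - B" k "{..<k}" t] assms(3,4) t_below lepoll_refl
    by (metis DiffD1 lessThan_iff)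
  \<comment> \<open>Cofinality only gives \<open>s \<beta> \<le> x\<close>; moving \<open>s \<beta>\<close> strictly above \<open>t \<beta>\<close> makes that strict.\<close>
  have "\<forall>\<beta>. \<beta> < k \<longrightarrow> (\<exists>h\<in>prodA B. dom_lt B (t \<beta>) h)"
    using exists_prodA_dom_lt[of B] assms(2,3) t_below by blast
  then obtain s where s: "\<And>\<beta>. \<beta> < k \<Longrightarrow> s \<beta> \<in> prodA B"
    and s_above: "\<And>\<beta>. \<beta> < k \<Longrightarrow> dom_lt B (t \<beta>) (s \<beta>)"
    by metis
  define pad where "pad x = restrict (\<lambda>a. if a \<in> B then x a else u a) A" for x
  have pad: "pad x \<in> prodA A" if "x \<in> prodA B" for x
    using that u assms(2) by (auto simp: pad_def prodA_def)
  have "g \<circ> pad \<in> prodA B \<rightarrow> {..<k}" using g_range pad by auto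
  moreover have "cofinal_ord k ((g \<circ> pad) ` X)" if X: "cofinal_prod B X" for X
    unfolding cofinal_ord_def
  proof (intro conjI allI impI)
    show "(g \<circ> pad) ` X \<subseteq> {..<k}" using X g_range pad unfolding cofinal_prod_def by auto
    fix \<beta> assume \<beta>: "\<beta> < k"
    obtain x where x: "x \<in> X" "s \<beta> = x \<or> dom_lt B (s \<beta>) x"
      using X s[OF \<beta>] unfolding cofinal_prod_def by blast
    have "dom_lt B (t \<beta>) x"
      using x(2) s_above[OF \<beta>] unfolding dom_lt_def by (metis order.strict_trans)
    then have "dom_lt A (t \<beta>) (pad x)"
      using u_above[OF \<beta>] unfolding dom_lt_def pad_def by auto
    moreover have "pad x \<in> prodA A" using X x(1) pad unfolding cofinal_prod_def by auto
    ultimately have "\<beta> \<le> (g \<circ> pad) x" using t_threshold[OF \<beta>] by auto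
    then show "\<exists>y\<in>(g \<circ> pad) ` X. \<beta> \<le> y" using x(1) by blast
  qed
  ultimately show ?thesis unfolding tukey_ge_def by blast
qed

theorem lemma3p3:
  fixes A :: "'a::wellorder set" and k :: 'a
  assumes "\<forall>a\<in>A. regular a"
    and "k \<in> spec A"
    and "\<exists>a\<in>A. k < a"
  shows "k \<in> spec (A \<inter> {..k})"
proof -
  have "regular k" and "tukey_ge A k" using assms(2) unfolding spec_def by auto
  moreover have "tukey_ge (A \<inter> {..k}) k"
    using tukey_ge_drop_large[OF \<open>tukey_ge A k\<close>] assms(1) by (auto simp: not_le)
  ultimately show ?thesis unfolding spec_def by blast
qed

end
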